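(* For each voter, the sincere strategy is dominant (and it is the unique dominant strategy).
   Context: Let $\mathcal{X}$ be a finite set of alternatives. A proto-ranking is an irreflexive transitive relation on $\mathcal{X}$; a ranking is a total proto-ranking. There are $I$ voters ($I$ odd), each voter $i$ having a preference $\succ_i$ (a ranking on $\mathcal{X}$), and a chair. Interaction: start from $R_0=\varnothing$; in each period $t\geq1$ with $R_{t-1}$ not total, the chair offers a pair $\{x,y\}$ of distinct alternatives unranked by $R_{t-1}$; each voter votes for $x$ or $y$; the alternative with more votes wins, and $R_t$ is the transitive closure of $R_{t-1}\cup\{(\text{winner},\text{loser})\}$; stop when $R_t$ is total. A history is the sequence of offered pairs together with which alternative won each (not individual votes). A strategy of the chair assigns to each non-terminal history a pair unranked at it. A strategy $\sigma_i$ of voter $i$ specifies, for each non-terminal history and each pair offered after it, which of the two alternatives to vote for. The sincere strategy of voter $i$ always votes for the $\succ_i$-better alternative of the offered pair. For strategies $\sigma,\sigma_1,\dots,\sigma_I$, $R(\sigma,\sigma_1,\dots,\sigma_I)$ denotes the resulting final ranking. A ranking $R$ is more aligned with $\succ_i$ than $R'$ if for all $x\succ_i y$, $xR'y$ implies $xRy$. Strategy $\sigma_i'$ of voter $i$ is obviously better than $\sigma_i$ against $\sigma,\sigma_{-i}$ (strategies of the chair and other voters) if $R(\sigma,\sigma_i',\sigma_{-i})$ is distinct from, and more aligned with $\succ_i$ than, $R(\sigma,\sigma_i,\sigma_{-i})$. A strategy $\sigma_i$ is dominant if for every other strategy $\sigma_i'$ of voter $i$: (i) there are no strategies $\sigma,\sigma_{-i}$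 against which $\sigma_i'$ is obviously better than $\sigma_i$, and (ii) there exist strategies $\sigma,\sigma_{-i}$ against which $\sigma_i$ is obviously better than $\sigma_i'$. *)

theory Defs
  imports Main
begin

text \<open>A relation is ('a \<times> 'a) set,
  (x,y) \<in> R meaning "x is ranked above y".\<close>

definition ranking :: "('a \<times> 'a) set \<Rightarrow> bool" where
  "ranking R \<longleftrightarrow> irrefl R \<and> trans R \<and> total R"

definition unranked :: "('a \<times> 'a) set \<Rightarrow> 'a \<Rightarrow> 'a \<Rightarrow> bool" where
  "unranked R x y \<longleftrightarrow> x \<noteq> y \<and> (x, y) \<notin> R \<and> (y, x) \<notin> R"

text \<open>A history: chronological list of periods; each period is recorded as
  (winner, loser), which encodes the offered pair {winner, loser} and its winner.\<close>
type_synonym 'a history = "('a \<times> 'a) list"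

definition hist_rel :: "'a history \<Rightarrow> ('a \<times> 'a) set" where
  "hist_rel h = foldl (\<lambda>R wl. trancl (R \<union> {wl})) {} h"

inductive valid_hist :: "'a history \<Rightarrow> bool" where
  Nil: "valid_hist []"
| snoc: "valid_hist h \<Longrightarrow> \<not> total (hist_rel h) \<Longrightarrow> unranked (hist_rel h) w l
         \<Longrightarrow> valid_hist (h @ [(w, l)])"

definition non_terminal :: "'a history \<Rightarrow> bool" where
  "non_terminal h \<longleftrightarrow> valid_hist h \<and> \<not> total (hist_rel h)"

definition offerable :: "'a history \<Rightarrow> 'a set \<Rightarrow> bool" where
  "offerable h P \<longleftrightarrow> (\<exists>x y. P = {x, y} \<and> unranked (hist_rel h) x y)"

type_synonym 'a chair_strategy = "'a history \<Rightarrow> 'a set"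
type_synonym 'a voter_strategy = "'a history \<Rightarrow> 'a set \<Rightarrow> 'a"

definition chair_strat :: "'a chair_strategy \<Rightarrow> bool" where
  "chair_strat c \<longleftrightarrow> (\<forall>h. non_terminal h \<longrightarrow> offerable h (c h))"

definition voter_strat :: "'a voter_strategy \<Rightarrow> bool" where
  "voter_strat s \<longleftrightarrow> (\<forall>h P. non_terminal h \<and> offerable h P \<longrightarrow> s h P \<in> P)"

definition same_strat :: "'a voter_strategy \<Rightarrow> 'a voter_strategy \<Rightarrow> bool" where
  "same_strat s t \<longleftrightarrow> (\<forall>h P. non_terminal h \<and> offerable h P \<longrightarrow> s h P = t h P)"

definition sincere :: "('a \<times> 'a) set \<Rightarrow> 'a voter_strategy" where
  "sincere pref h P = (THE x. x \<in> P \<and> (\<forall>y\<in>P. y \<noteq> x \<longrightarrow> (x, y) \<in> pref))"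

text \<open>Voters are 0..<I.  The winner of pair P is the alternative with a strict majority.\<close>
definition winner :: "nat \<Rightarrow> (nat \<Rightarrow> 'a) \<Rightarrow> 'a set \<Rightarrow> 'a" where
  "winner I votes P = (SOME w. w \<in> P \<and> I < 2 * card {j. j < I \<and> votes j = w})"

definition step :: "nat \<Rightarrow> 'a chair_strategy \<Rightarrow> (nat \<Rightarrow> 'a voter_strategy) \<Rightarrow> 'a history
                    \<Rightarrow> 'a \<times> 'a" where
  "step I c vs h = (let P = c h; w = winner I (\<lambda>j. vs j h P) P in (w, SOME l. l \<in> P \<and> l \<noteq> w))"

fun play :: "nat \<Rightarrow> 'a chair_strategy \<Rightarrow> (nat \<Rightarrow> 'a voter_strategy) \<Rightarrow> nat \<Rightarrow> 'a history" where
  "play I c vs 0 = []"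
| "play I c vs (Suc n) = (let h = play I c vs n in
      if total (hist_rel h) then h else h @ [step I c vs h])"

text \<open>Every period ranks a previously unranked pair, so the
  interaction stops after at most card(UNIV)*card(UNIV) periods; playing that many
  (idle once terminal) periods yields the final ranking.\<close>
definition outcome :: "nat \<Rightarrow> ('a::finite) chair_strategy \<Rightarrow> (nat \<Rightarrow> 'a voter_strategy)
                       \<Rightarrow> ('a \<times> 'a) set" where
  "outcome I c vs = hist_rel (play I c vs (card (UNIV :: 'a set) * card (UNIV :: 'a set)))"

definition more_aligned :: "('a \<times> 'a) set \<Rightarrow> ('a \<times> 'a) set \<Rightarrow> ('a \<times> 'a) set \<Rightarrow> bool" where
  "more_aligned pref R R' \<longleftrightarrow> (\<forall>x y. (x, y) \<in> pref \<longrightarrow> (x, y) \<in> R' \<longrightarrow> (x, y) \<in> R)"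

definition obviously_better ::
  "nat \<Rightarrow> (nat \<Rightarrow> ('a::finite \<times> 'a) set) \<Rightarrow> nat \<Rightarrow> 'a chair_strategy
   \<Rightarrow> (nat \<Rightarrow> 'a voter_strategy) \<Rightarrow> 'a voter_strategy \<Rightarrow> 'a voter_strategy \<Rightarrow> bool" where
  "obviously_better I pref i c vs s' s \<longleftrightarrow>
     (let R' = outcome I c (vs(i := s')); R = outcome I c (vs(i := s))
      in R' \<noteq> R \<and> more_aligned (pref i) R' R)"

definition opponents_ok :: "nat \<Rightarrow> nat \<Rightarrow> 'a chair_strategy \<Rightarrow> (nat \<Rightarrow> 'a voter_strategy) \<Rightarrow> bool" where
  "opponents_ok I i c vs \<longleftrightarrow> chair_strat c \<and> (\<forall>j<I. j \<noteq> i \<longrightarrow> voter_strat (vs j))"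

definition dominant ::
  "nat \<Rightarrow> (nat \<Rightarrow> ('a::finite \<times> 'a) set) \<Rightarrow> nat \<Rightarrow> 'a voter_strategy \<Rightarrow> bool" where
  "dominant I pref i s \<longleftrightarrow> voter_strat s \<and>
     (\<forall>s'. voter_strat s' \<and> \<not> same_strat s' s \<longrightarrow>
        (\<not> (\<exists>c vs. opponents_ok I i c vs \<and> obviously_better I pref i c vs s' s)) \<and>
        (\<exists>c vs. opponents_ok I i c vs \<and> obviously_better I pref i c vs s s'))"

end

theory Submission
  imports Defs
begin

text \<open>
  Sincere voting is never obviously worse than a strategy s: at the first period in which the
  two plays differ, the offered pair {x, y} with x preferred to y is ranked x over y under
  sincere voting and y over x under s (a vote for y can only help y).  Ranked pairs are never
  revised, so the outcome under s contains (y, x), while the sincere outcome contains (x, y).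

  Conversely, let s differ from sincere voting at a history h and pair {x, y}.  Take two
  rankings T1, T2 extending the relation at h that differ only in the orientation of {x, y}.
  The chair replays h and then offers {x, y}; the other voters split evenly on {x, y},
  which makes the voter pivotal there, and everywhere else they vote unanimously according to
  T2 once y has beaten x and according to T1 otherwise.  The outcomes are T1 under sincere
  voting and T2 under s, and T1 is strictly more aligned.  Uniqueness is immediate: a
  dominant s would have to be not obviously worse than sincere voting.
\<close>

section \<open>Histories\<close>

lemma hist_rel_Nil [simp]: "hist_rel [] = {}"
  by (simp add: hist_rel_def)

lemma hist_rel_snoc [simp]: "hist_rel (h @ [p]) = (hist_rel h \<union> {p})\<^sup>+"
  by (simp add: hist_rel_def)

lemma hist_rel_append_mono: "hist_rel h \<subseteq> hist_rel (h @ g)"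
proof (induction g rule: rev_induct)
  case (snoc p g)
  have "hist_rel (h @ g) \<subseteq> hist_rel ((h @ g) @ [p])"
    unfolding hist_rel_snoc[of "h @ g"] by (auto intro: r_into_trancl')
  then show ?case
    using snoc.IH by simp
qed simp

lemma set_subset_hist_rel: "set h \<subseteq> hist_rel h"
  by (induction h rule: rev_induct) (auto intro: r_into_trancl')

lemma irrefl_trancl_insert_unranked:
  assumes "irrefl R" "trans R" "unranked R w l"
  shows "irrefl ((R \<union> {(w, l)})\<^sup>+)"
proof -
  have "(R \<union> {(w, l)})\<^sup>+ = R \<union> {(a, b). (a, w) \<in> R\<^sup>* \<and> (l, b) \<in> R\<^sup>*}"
    using trancl_insert[of w l R] assms(2) by (simp add: trancl_id)
  moreover have "R\<^sup>* = R \<union> Id"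
    using assms(2) by (metis rtrancl_trancl_reflcl trancl_id)
  ultimately show ?thesis
    using assms unfolding irrefl_def unranked_def trans_def by auto
qed

lemma valid_hist_strict_order:
  "valid_hist h \<Longrightarrow> irrefl (hist_rel h) \<and> trans (hist_rel h)"
proof (induction rule: valid_hist.induct)
  case (snoc h w l)
  then show ?case
    using irrefl_trancl_insert_unranked[of "hist_rel h" w l] by simp
qed (simp add: irrefl_def)

lemma valid_hist_length_le_card:
  "valid_hist (h :: ('a::finite \<times> 'a) list) \<Longrightarrow> length h \<le> card (hist_rel h)"
proof (induction rule: valid_hist.induct)
  case (snoc h w l)
  then have "hist_rel h \<subset> hist_rel (h @ [(w, l)])"
    unfolding unranked_def by auto
  then have "card (hist_rel h) < card (hist_rel (h @ [(w, l)]))"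
    by (simp add: psubset_card_mono)
  then show ?case
    using snoc.IH by simp
qed simp

lemma valid_hist_length_less:
  assumes "valid_hist (h :: ('a::finite \<times> 'a) list)"
  shows "length h < card (UNIV :: 'a set) * card (UNIV :: 'a set)"
proof -
  have "hist_rel h \<subset> UNIV"
    using valid_hist_strict_order[OF assms] unfolding irrefl_def by auto
  then have "card (hist_rel h) < card (UNIV :: ('a \<times> 'a) set)"
    by (simp add: psubset_card_mono)
  also have "card (UNIV :: ('a \<times> 'a) set) = card (UNIV :: 'a set) * card (UNIV :: 'a set)"
    by (metis UNIV_Times_UNIV card_cartesian_product)
  finally show ?thesis
    using valid_hist_length_le_card[OF assms] by simp
qed

lemma valid_hist_take:
  "valid_hist h \<Longrightarrow> k < length h \<Longrightarrow>
     valid_hist (take k h) \<and> \<not> total (hist_rel (take k h)) \<and>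
     unranked (hist_rel (take k h)) (fst (h ! k)) (snd (h ! k))"
proof (induction arbitrary: k rule: valid_hist.induct)
  case (snoc h w l)
  show ?case
  proof (cases "k < length h")
    case True
    then show ?thesis using snoc by (simp add: nth_append)
  next
    case False
    then have "k = length h" using snoc.prems by simp
    then show ?thesis using snoc by simp
  qed
qed simp

section \<open>Rankings\<close>

lemma ranking_asym: "ranking T \<Longrightarrow> (a, b) \<in> T \<Longrightarrow> (b, a) \<notin> T"
  unfolding ranking_def irrefl_def trans_def by blast

lemma ranking_orient:
  assumes "ranking T" "a \<noteq> b"
  obtains w l where "{a, b} = {w, l}" "(w, l) \<in> T" "w \<noteq> l"
  using assms unfolding ranking_def total_on_def by (metis UNIV_I insert_commute)

lemma ranking_subset_eq:
  assumes "ranking F" "ranking T" "F \<subseteq> T"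
  shows "F = T"
proof (intro equalityI subsetI)
  fix p assume "p \<in> T"
  moreover obtain a b where "p = (a, b)" by (cases p)
  ultimately show "p \<in> F"
    using assms ranking_asym[OF assms(2)] unfolding ranking_def irrefl_def total_on_def
    by (metis UNIV_I subsetD)
qed (use assms(3) in blast)

lemma sincere_eq: "ranking T \<Longrightarrow> (a, b) \<in> T \<Longrightarrow> sincere T h {a, b} = a"
  unfolding sincere_def by (rule the_equality) (auto dest: ranking_asym)

lemma sincere_mem:
  assumes "ranking T" "a \<noteq> b"
  shows "sincere T h {a, b} \<in> {a, b}"
proof -
  obtain w l where "{a, b} = {w, l}" "(w, l) \<in> T"
    using ranking_orient[OF assms] .
  then show ?thesis
    using sincere_eq[OF assms(1)] by (metis insertI1)
qed

lemma voter_strat_sincere: "ranking T \<Longrightarrow> voter_strat (sincere T)"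
  unfolding voter_strat_def offerable_def unranked_def using sincere_mem by fastforce

lemma strict_order_extends_to_ranking:
  fixes S :: "('a::finite \<times> 'a) set"
  assumes "irrefl S" "trans S"
  obtains T where "ranking T" "S \<subseteq> T"
  using assms
proof (induction "card (UNIV - S)" arbitrary: S rule: less_induct)
  case less
  show ?case
  proof (cases "total S")
    case True
    then show ?thesis using less.prems unfolding ranking_def by blast
  next
    case False
    then obtain a b where ab: "unranked S a b"
      unfolding total_on_def unranked_def by blast
    let ?S' = "(S \<union> {(a, b)})\<^sup>+"
    have "S \<subseteq> ?S'" "(a, b) \<in> ?S'" by (auto intro: r_into_trancl')
    then have "card (UNIV - ?S') < card (UNIV - S)"
      using ab unfolding unranked_def by (intro psubset_card_mono) auto
    moreover have "irrefl ?S'"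
      using irrefl_trancl_insert_unranked[OF less.prems(2,3) ab] .
    ultimately show ?thesis
      using less.hyps[of ?S'] less.prems(1) \<open>S \<subseteq> ?S'\<close> by (meson order_trans trans_trancl)
  qed
qed

text \<open>A smaller key means a higher rank.\<close>

definition key_lex :: "('a \<Rightarrow> nat) \<Rightarrow> ('a \<times> 'a) set \<Rightarrow> ('a \<times> 'a) set" where
  "key_lex f L = {(a, b). f a < f b \<or> (f a = f b \<and> (a, b) \<in> L)}"

lemma ranking_key_lex:
  assumes "ranking L"
  shows "ranking (key_lex f L)"
  unfolding ranking_def
proof (intro conjI)
  show "irrefl (key_lex f L)"
    using assms unfolding ranking_def key_lex_def irrefl_def by auto
  show "trans (key_lex f L)"
    using assms unfolding ranking_def key_lex_def trans_def
    by (smt (verit) case_prod_conv le_less_trans less_le_trans mem_Collect_eq order.order_iff_strict)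
  show "total (key_lex f L)"
    using assms unfolding ranking_def key_lex_def total_on_def by (auto simp: not_less_iff_gr_or_eq)
qed

text \<open>
  Tiers of the ranking built from S around the unranked pair u, v: first the elements not
  below u or v, then u, then v, then the elements strictly below u or v.  Ordering by tier
  keeps S and puts u above v, and exchanging u and v moves only the pair {u, v}.
\<close>

definition tier :: "('a \<times> 'a) set \<Rightarrow> 'a \<Rightarrow> 'a \<Rightarrow> 'a \<Rightarrow> nat" where
  "tier S u v z =
     (if z = u then 1 else if z = v then 2 else if (u, z) \<in> S \<or> (v, z) \<in> S then 3 else 0)"

lemma subset_key_lex_tier:
  assumes "irrefl S" "trans S" "unranked S u v" "S \<subseteq> L"
  shows "S \<subseteq> key_lex (tier S u v) L"
proof (intro subrelI)
  fix a b assume ab: "(a, b) \<in> S"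
  have "tier S u v a \<le> tier S u v b"
  proof (cases "a = u \<or> a = v \<or> (u, a) \<in> S \<or> (v, a) \<in> S")
    case True
    then have "tier S u v b = 3"
      using ab assms(1-3) unfolding tier_def irrefl_def trans_def unranked_def by metis
    then show ?thesis by (simp add: tier_def)
  qed (simp add: tier_def)
  then show "(a, b) \<in> key_lex (tier S u v) L"
    using ab assms(4) unfolding key_lex_def by auto
qed

lemma key_lex_tier_pair: "u \<noteq> v \<Longrightarrow> (u, v) \<in> key_lex (tier S u v) L"
  unfolding key_lex_def tier_def by auto

lemma key_lex_tier_swap:
  "(a, b) \<in> key_lex (tier S v u) L \<Longrightarrow> {a, b} \<noteq> {u, v} \<Longrightarrow> (a, b) \<in> key_lex (tier S u v) L"
  unfolding key_lex_def tier_def by (auto split: if_splits)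

lemma rankings_differing_only_at:
  fixes S :: "('a::finite \<times> 'a) set"
  assumes "irrefl S" "trans S" "unranked S x y"
  obtains T1 T2 where "ranking T1" "ranking T2" "S \<subseteq> T1" "S \<subseteq> T2"
    "(x, y) \<in> T1" "(y, x) \<in> T2"
    "\<And>a b. (a, b) \<in> T2 \<Longrightarrow> {a, b} \<noteq> {x, y} \<Longrightarrow> (a, b) \<in> T1"
proof -
  obtain L where L: "ranking L" "S \<subseteq> L"
    using strict_order_extends_to_ranking[OF assms(1,2)] .
  have yx: "unranked S y x" and "x \<noteq> y"
    using assms(3) unfolding unranked_def by auto
  show ?thesis
  proof (rule that)
    show "ranking (key_lex (tier S x y) L)" "ranking (key_lex (tier S y x) L)"
      using ranking_key_lex[OF L(1)] by blast+
    show "S \<subseteq> key_lex (tier S x y) L"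
      by (rule subset_key_lex_tier[OF assms L(2)])
    show "S \<subseteq> key_lex (tier S y x) L"
      by (rule subset_key_lex_tier[OF assms(1,2) yx L(2)])
    show "(x, y) \<in> key_lex (tier S x y) L"
      using \<open>x \<noteq> y\<close> by (rule key_lex_tier_pair)
    show "(y, x) \<in> key_lex (tier S y x) L"
      using \<open>x \<noteq> y\<close>[symmetric] by (rule key_lex_tier_pair)
  qed (rule key_lex_tier_swap)
qed

section \<open>Majority votes and plays\<close>

lemma winner_pair:
  assumes "odd I" "a \<noteq> b" "\<forall>j<I. votes j \<in> {a, b}"
  shows "winner I votes {a, b} = (if I < 2 * card {j. j < I \<and> votes j = a} then a else b)"
proof -
  let ?A = "{j. j < I \<and> votes j = a}" and ?B = "{j. j < I \<and> votes j = b}"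
  have "card ?A + card ?B = card (?A \<union> ?B)"
    by (rule card_Un_disjoint[symmetric]) (use assms(2) in auto)
  also have "?A \<union> ?B = {..<I}"
    using assms(3) by auto
  finally have "(I < 2 * card ?A) \<longleftrightarrow> \<not> (I < 2 * card ?B)"
    using assms(1) by simp presburger
  then have "\<And>w. w \<in> {a, b} \<and> I < 2 * card {j. j < I \<and> votes j = w} \<longleftrightarrow>
      w = (if I < 2 * card ?A then a else b)"
    using assms(2) by auto
  then show ?thesis
    unfolding winner_def by simp
qed

lemma winner_mono:
  assumes "odd I" "a \<noteq> b" "\<forall>j<I. votes j \<in> {a, b}" "\<forall>j<I. votes' j \<in> {a, b}"
    and "\<forall>j<I. votes j = a \<longrightarrow> votes' j = a"
    and "winner I votes {a, b} = a"
  shows "winner I votes' {a, b} = a"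
proof -
  have "card {j. j < I \<and> votes j = a} \<le> card {j. j < I \<and> votes' j = a}"
    using assms(5) by (intro card_mono) auto
  moreover have "I < 2 * card {j. j < I \<and> votes j = a}"
    using assms(1-3,6) winner_pair[of I a b votes] by (auto split: if_splits)
  ultimately show ?thesis
    using assms(1,2,4) winner_pair[of I a b votes'] by simp
qed

lemma winner_unanimous_others:
  assumes "odd I" "3 \<le> I" "i < I" "a \<noteq> b"
    and "\<forall>j<I. j \<noteq> i \<longrightarrow> votes j = a" "votes i \<in> {a, b}"
  shows "winner I votes {a, b} = a"
proof -
  have "{..<I} - {i} \<subseteq> {j. j < I \<and> votes j = a}"
    using assms(5) by auto
  then have "I - 1 \<le> card {j. j < I \<and> votes j = a}"
    using card_mono[of "{j. j < I \<and> votes j = a}" "{..<I} - {i}"] assms(3) by simp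
  then have "I < 2 * card {j. j < I \<and> votes j = a}"
    using assms(2) by linarith
  moreover have "\<forall>j<I. votes j \<in> {a, b}"
    using assms(5,6) by auto
  ultimately show ?thesis
    using assms(1,4) winner_pair[of I a b votes] by simp
qed

lemma winner_pivotal:
  assumes "odd I" "i < I" "x \<noteq> y" "\<forall>j<I. votes j \<in> {x, y}"
    and "card {j. j < I \<and> j \<noteq> i \<and> votes j = x} = I div 2"
  shows "winner I votes {x, y} = votes i"
proof (cases "votes i = x")
  case True
  then have "{j. j < I \<and> votes j = x} = insert i {j. j < I \<and> j \<noteq> i \<and> votes j = x}"
    using assms(2) by auto
  then have "card {j. j < I \<and> votes j = x} = Suc (I div 2)"
    using assms(5) by simp
  then show ?thesis
    using True assms(1,3,4) winner_pair[of I x y votes] by simp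
next
  case False
  then have "{j. j < I \<and> votes j = x} = {j. j < I \<and> j \<noteq> i \<and> votes j = x}"
    by auto
  then show ?thesis
    using False assms winner_pair[of I x y votes] by auto
qed

lemma step_eq:
  assumes "c h = {a, b}" "a \<noteq> b" "winner I (\<lambda>j. vs j h (c h)) (c h) = a"
  shows "step I c vs h = (a, b)"
proof -
  have "(SOME l. l \<in> {a, b} \<and> l \<noteq> a) = b"
    using assms(2) by (intro some_equality) auto
  then show ?thesis
    using assms unfolding step_def Let_def by simp
qed

definition admissible :: "nat \<Rightarrow> 'a chair_strategy \<Rightarrow> (nat \<Rightarrow> 'a voter_strategy) \<Rightarrow> bool" where
  "admissible I c vs \<longleftrightarrow> chair_strat c \<and> (\<forall>j<I. voter_strat (vs j))"

lemma admissible_fun_upd: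
  "opponents_ok I i c vs \<Longrightarrow> voter_strat s \<Longrightarrow> admissible I c (vs(i := s))"
  unfolding admissible_def opponents_ok_def by simp

lemma offered_pair:
  assumes "admissible I c vs" "non_terminal h"
  obtains a b where "c h = {a, b}" "unranked (hist_rel h) a b" "\<forall>j<I. vs j h (c h) \<in> {a, b}"
proof -
  have "offerable h (c h)"
    using assms unfolding admissible_def chair_strat_def by blast
  then obtain a b where "c h = {a, b}" "unranked (hist_rel h) a b"
    unfolding offerable_def by blast
  moreover have "\<forall>j<I. vs j h (c h) \<in> c h"
    using assms \<open>offerable h (c h)\<close> unfolding admissible_def voter_strat_def by blast
  ultimately show ?thesis
    using that by simp
qed

lemma step_unranked:
  assumes "admissible I c vs" "odd I" "non_terminal h"
  shows "unranked (hist_rel h) (fst (step I c vs h)) (snd (step I c vs h))"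
proof -
  obtain a b where ab: "c h = {a, b}" "unranked (hist_rel h) a b" "\<forall>j<I. vs j h (c h) \<in> {a, b}"
    using offered_pair[OF assms(1,3)] .
  then have "a \<noteq> b"
    unfolding unranked_def by simp
  moreover have "winner I (\<lambda>j. vs j h (c h)) (c h) \<in> {a, b}"
    using ab winner_pair[OF assms(2) \<open>a \<noteq> b\<close>, of "\<lambda>j. vs j h (c h)"] by simp
  ultimately have "step I c vs h = (a, b) \<or> step I c vs h = (b, a)"
    using ab(1) step_eq[of c h a b I vs] step_eq[of c h b a I vs] by (auto simp: insert_commute)
  then show ?thesis
    using ab(2) unfolding unranked_def by auto
qed

lemma play_Suc_step:
  "\<not> total (hist_rel (play I c vs n)) \<Longrightarrow>
     play I c vs (Suc n) = play I c vs n @ [step I c vs (play I c vs n)]"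
  by (simp add: Let_def)

lemma play_Suc_total:
  "total (hist_rel (play I c vs n)) \<Longrightarrow> play I c vs (Suc n) = play I c vs n"
  by (simp add: Let_def)

lemma valid_hist_play:
  assumes "admissible I c vs" "odd I"
  shows "valid_hist (play I c vs n)"
proof (induction n)
  case (Suc n)
  let ?h = "play I c vs n"
  show ?case
  proof (cases "total (hist_rel ?h)")
    case False
    then have "non_terminal ?h"
      using Suc.IH unfolding non_terminal_def by simp
    then have "valid_hist (?h @ [(fst (step I c vs ?h), snd (step I c vs ?h))])"
      using valid_hist.snoc[OF Suc.IH False] step_unranked[OF assms] by blast
    then show ?thesis
      using play_Suc_step[OF False] by simp
  qed (use Suc.IH in simp)
qed (simp add: valid_hist.Nil)

lemma play_prefix: "m \<le> n \<Longrightarrow> \<exists>g. play I c vs n = play I c vs m @ g"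
proof (induction n rule: dec_induct)
  case (step n)
  then show ?case
    by (auto simp: Let_def)
qed simp

lemma hist_rel_play_mono: "m \<le> n \<Longrightarrow> hist_rel (play I c vs m) \<subseteq> hist_rel (play I c vs n)"
  using play_prefix hist_rel_append_mono by metis

lemma length_play: "\<not> total (hist_rel (play I c vs n)) \<Longrightarrow> length (play I c vs n) = n"
proof (induction n)
  case (Suc n)
  then have "\<not> total (hist_rel (play I c vs n))"
    by (auto simp: Let_def split: if_splits)
  then show ?case
    using Suc by (simp add: Let_def)
qed simp

lemma ranking_outcome:
  fixes vs :: "nat \<Rightarrow> ('a::finite) voter_strategy"
  assumes "admissible I c vs" "odd I"
  shows "ranking (outcome I c vs)"
proof -
  let ?N = "card (UNIV :: 'a set) * card (UNIV :: 'a set)"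
  have valid: "valid_hist (play I c vs ?N)"
    by (rule valid_hist_play[OF assms])
  have "total (hist_rel (play I c vs ?N))"
    using length_play valid_hist_length_less[OF valid] by (metis less_irrefl)
  then show ?thesis
    using valid_hist_strict_order[OF valid] unfolding ranking_def outcome_def by simp
qed

lemma step_unanimous_others:
  assumes "admissible I c vs" "odd I" "3 \<le> I" "i < I" "non_terminal h"
    and "c h = {w, l}" "w \<noteq> l" "\<forall>j<I. j \<noteq> i \<longrightarrow> vs j h (c h) = w"
  shows "step I c vs h = (w, l)"
proof -
  have "vs i h (c h) \<in> {w, l}"
    using offered_pair[OF assms(1,5)] assms(4,6) by (metis doubleton_eq_iff)
  then have "winner I (\<lambda>j. vs j h (c h)) (c h) = w"
    using winner_unanimous_others[OF assms(2-4,7)] assms(6,8) by simp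
  then show ?thesis
    by (rule step_eq[of c h w l, OF assms(6,7)])
qed

section \<open>Sincere voting is never obviously worse\<close>

lemma step_sincere_vs_deviation:
  assumes "odd I" "ranking P" "non_terminal h"
    and "A i = sincere P" "\<forall>j. j \<noteq> i \<longrightarrow> A j = B j"
    and "admissible I c A" "admissible I c B" "step I c A h \<noteq> step I c B h"
  obtains x y where "(x, y) \<in> P" "step I c A h = (x, y)" "step I c B h = (y, x)"
proof -
  define vA where "vA j = A j h (c h)" for j
  define vB where "vB j = B j h (c h)" for j
  obtain a b where ab: "c h = {a, b}" "unranked (hist_rel h) a b" "\<forall>j<I. vA j \<in> {a, b}"
    using offered_pair[OF assms(6,3)] unfolding vA_def by metis
  obtain x y where xy: "{a, b} = {x, y}" "(x, y) \<in> P" "x \<noteq> y"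
    using ranking_orient[OF assms(2)] ab(2) unfolding unranked_def by blast
  have cxy: "c h = {y, x}"
    using ab(1) xy(1) by (simp add: insert_commute)
  obtain a' b' where "c h = {a', b'}" "\<forall>j<I. vB j \<in> {a', b'}"
    using offered_pair[OF assms(7,3)] unfolding vB_def by metis
  then have vA: "\<forall>j<I. vA j \<in> {y, x}" and vB: "\<forall>j<I. vB j \<in> {y, x}"
    using ab(3) cxy xy(1) by (simp_all add: insert_commute)
  note winner_A = winner_pair[OF assms(1) xy(3)[symmetric] vA]
  note winner_B = winner_pair[OF assms(1) xy(3)[symmetric] vB]
  have winners_differ: "winner I vA {y, x} \<noteq> winner I vB {y, x}"
    using assms(8) cxy unfolding step_def Let_def vA_def vB_def by auto
  have "winner I vA {y, x} \<noteq> y"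
  proof
    assume "winner I vA {y, x} = y"
    moreover have "\<forall>j<I. vA j = y \<longrightarrow> vB j = y"
      using sincere_eq[OF assms(2) xy(2)] assms(4,5) cxy xy(3) unfolding vA_def vB_def
      by (metis insert_commute)
    ultimately have "winner I vB {y, x} = y"
      using winner_mono[OF assms(1) xy(3)[symmetric] vA vB] by blast
    then show False
      using winners_differ \<open>winner I vA {y, x} = y\<close> by simp
  qed
  then have "winner I vA {y, x} = x" "winner I vB {y, x} = y"
    using winners_differ winner_A winner_B by (simp_all split: if_splits)
  then have "step I c A h = (x, y)" "step I c B h = (y, x)"
    using step_eq[of c h x y] step_eq[of c h y x] cxy xy(3)
    unfolding vA_def vB_def by (simp_all add: insert_commute)
  then show ?thesis
    using that[OF xy(2)] by blast
qed

lemma plays_sincere_vs_deviation: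
  assumes "odd I" "ranking P"
    and "A i = sincere P" "\<forall>j. j \<noteq> i \<longrightarrow> A j = B j"
    and "admissible I c A" "admissible I c B"
  shows "play I c A n = play I c B n \<or>
    (\<exists>x y. (x, y) \<in> P \<and> (x, y) \<in> hist_rel (play I c A n) \<and> (y, x) \<in> hist_rel (play I c B n))"
proof (induction n)
  case (Suc n)
  show ?case
  proof (cases "play I c A n = play I c B n")
    case equal: True
    let ?h = "play I c A n"
    show ?thesis
    proof (cases "total (hist_rel ?h) \<or> step I c A ?h = step I c B ?h")
      case True
      then have "play I c A (Suc n) = play I c B (Suc n)"
        using equal play_Suc_total[of I c A n] play_Suc_total[of I c B n]
          play_Suc_step[of I c A n] play_Suc_step[of I c B n]
        by (metis (no_types, lifting))
      then show ?thesis ..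
    next
      case False
      have "non_terminal ?h"
        using False valid_hist_play[OF assms(5,1)] unfolding non_terminal_def by simp
      then obtain x y where xy: "(x, y) \<in> P" "step I c A ?h = (x, y)" "step I c B ?h = (y, x)"
        using step_sincere_vs_deviation[OF assms(1,2) _ assms(3-6)] False by metis
      have "play I c A (Suc n) = ?h @ [(x, y)]" "play I c B (Suc n) = ?h @ [(y, x)]"
        using False equal xy play_Suc_step[of I c A n] play_Suc_step[of I c B n]
        by simp_all
      then show ?thesis
        using xy(1) set_subset_hist_rel[of "?h @ [(x, y)]"] set_subset_hist_rel[of "?h @ [(y, x)]"]
        by (simp del: hist_rel_snoc) blast
    qed
  next
    case False
    then show ?thesis
      using Suc.IH hist_rel_play_mono[OF le_SucI[OF order.refl], of I c A]
        hist_rel_play_mono[OF le_SucI[OF order.refl], of I c B]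
      by blast
  qed
qed simp

lemma sincere_not_obviously_worse:
  fixes c :: "('a::finite) chair_strategy"
  assumes "odd I" "ranking (pref i)" "opponents_ok I i c vs" "voter_strat s"
  shows "\<not> obviously_better I pref i c vs s (sincere (pref i))"
proof
  let ?A = "vs(i := sincere (pref i))" and ?B = "vs(i := s)"
  assume better: "obviously_better I pref i c vs s (sincere (pref i))"
  have ok: "admissible I c ?A" "admissible I c ?B"
    using admissible_fun_upd[OF assms(3)] voter_strat_sincere[OF assms(2)] assms(4) by blast+
  let ?N = "card (UNIV :: 'a set) * card (UNIV :: 'a set)"
  have "outcome I c ?A \<noteq> outcome I c ?B"
    using better unfolding obviously_better_def Let_def by auto
  then have "play I c ?A ?N \<noteq> play I c ?B ?N"
    unfolding outcome_def by metis
  moreover have "play I c ?A ?N = play I c ?B ?N \<or> (\<exists>x y. (x, y) \<in> pref i \<and>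
      (x, y) \<in> hist_rel (play I c ?A ?N) \<and> (y, x) \<in> hist_rel (play I c ?B ?N))"
    by (rule plays_sincere_vs_deviation[where i = i, OF assms(1,2) _ _ ok]) simp_all
  ultimately obtain x y where
    xy: "(x, y) \<in> pref i" "(x, y) \<in> outcome I c ?A" "(y, x) \<in> outcome I c ?B"
    unfolding outcome_def by blast
  then have "(x, y) \<notin> outcome I c ?B"
    using ranking_asym[OF ranking_outcome[OF ok(2) assms(1)]] by blast
  then show False
    using better xy(1,2) unfolding obviously_better_def more_aligned_def Let_def by blast
qed

section \<open>Every deviation is obviously worse against some opponents\<close>

definition replay_chair :: "'a history \<Rightarrow> 'a set \<Rightarrow> 'a chair_strategy" where
  "replay_chair h P h' =
     (if \<exists>k<length h. h' = take k h then {fst (h ! length h'), snd (h ! length h')}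
      else if h' = h then P else (SOME Q. offerable h' Q))"

lemma replay_chair_take:
  "k < length h \<Longrightarrow> replay_chair h P (take k h) = {fst (h ! k), snd (h ! k)}"
  unfolding replay_chair_def by auto

lemma take_neq_self: "k < length h \<Longrightarrow> take k h \<noteq> h"
  by (metis length_take min.absorb4 order.irrefl)

lemma replay_chair_self: "replay_chair h P h = P"
  unfolding replay_chair_def using take_neq_self by metis

lemma chair_strat_replay_chair:
  assumes "valid_hist h" "offerable h P"
  shows "chair_strat (replay_chair h P)"
  unfolding chair_strat_def
proof (intro allI impI)
  fix h' :: "'a history"
  assume "non_terminal h'"
  consider (prefix) k where "k < length h" "h' = take k h" | (self) "h' = h"
    | (other) "\<not> (\<exists>k<length h. h' = take k h)" "h' \<noteq> h"
    by blast
  then show "offerable h' (replay_chair h P h')"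
  proof cases
    case prefix
    then show ?thesis
      using valid_hist_take[OF assms(1) prefix(1)] replay_chair_take[OF prefix(1)]
      unfolding offerable_def by blast
  next
    case self
    then show ?thesis
      using assms(2) replay_chair_self by metis
  next
    case other
    have "\<exists>Q. offerable h' Q"
      using \<open>non_terminal h'\<close>
      unfolding non_terminal_def total_on_def offerable_def unranked_def by blast
    then show ?thesis
      using other unfolding replay_chair_def by (auto intro: someI_ex)
  qed
qed

lemma play_replays_history:
  assumes "admissible I c vs" "odd I" "3 \<le> I" "i < I" "valid_hist h"
    and "\<And>k. k < length h \<Longrightarrow> c (take k h) = {fst (h ! k), snd (h ! k)}"
    and "\<And>k j. k < length h \<Longrightarrow> j < I \<Longrightarrow> j \<noteq> i \<Longrightarrow>
      vs j (take k h) (c (take k h)) = fst (h ! k)"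
  shows "k \<le> length h \<Longrightarrow> play I c vs k = take k h"
proof (induction k)
  case (Suc k)
  then have k: "k < length h" and IH: "play I c vs k = take k h"
    by simp_all
  note prefix = valid_hist_take[OF assms(5) k]
  then have "fst (h ! k) \<noteq> snd (h ! k)" "non_terminal (take k h)"
    unfolding unranked_def non_terminal_def by simp_all
  then have "step I c vs (take k h) = (fst (h ! k), snd (h ! k))"
    using step_unanimous_others[OF assms(1-4)] assms(6,7)[OF k] by blast
  then show ?case
    using play_Suc_step[of I c vs k] IH prefix take_Suc_conv_app_nth[OF k] by simp
qed simp

lemma play_stays_within_ranking:
  assumes "admissible I c vs" "odd I" "3 \<le> I" "i < I" "ranking T"
    and "hist_rel (play I c vs n0) \<subseteq> T"
    and "\<And>g j. non_terminal (play I c vs n0 @ g) \<Longrightarrow> hist_rel (play I c vs n0 @ g) \<subseteq> T \<Longrightarrow>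
       j < I \<Longrightarrow> j \<noteq> i \<Longrightarrow>
       vs j (play I c vs n0 @ g) (c (play I c vs n0 @ g)) =
       sincere T (play I c vs n0 @ g) (c (play I c vs n0 @ g))"
  shows "n0 \<le> n \<Longrightarrow> hist_rel (play I c vs n) \<subseteq> T"
proof (induction n rule: dec_induct)
  case (step n)
  let ?h = "play I c vs n"
  show ?case
  proof (cases "total (hist_rel ?h)")
    case False
    then have nt: "non_terminal ?h"
      using valid_hist_play[OF assms(1,2)] unfolding non_terminal_def by simp
    obtain g where g: "?h = play I c vs n0 @ g"
      using play_prefix[OF step.hyps(1)] by blast
    obtain a b where "c ?h = {a, b}" "unranked (hist_rel ?h) a b"
      using offered_pair[OF assms(1) nt] by metis
    then obtain w l where wl: "c ?h = {w, l}" "(w, l) \<in> T" "w \<noteq> l"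
      using ranking_orient[OF assms(5)] unfolding unranked_def by metis
    have "\<forall>j<I. j \<noteq> i \<longrightarrow> vs j ?h (c ?h) = w"
      using assms(7)[of g] nt step.IH g sincere_eq[OF assms(5) wl(2)] wl(1) by simp
    then have "step I c vs ?h = (w, l)"
      using step_unanimous_others[OF assms(1-4) nt wl(1,3)] by blast
    moreover have "(hist_rel ?h \<union> {(w, l)})\<^sup>+ \<subseteq> T"
      using trancl_mono_subset[of "hist_rel ?h \<union> {(w, l)}" T] step.IH wl(2) assms(5)
      unfolding ranking_def by (simp add: trancl_id)
    ultimately show ?thesis
      using play_Suc_step[OF False] by simp
  qed (use step.IH play_Suc_total in simp)
qed (rule assms(6))

definition pivot_voters ::
  "nat set \<Rightarrow> 'a history \<Rightarrow> 'a \<Rightarrow> 'a \<Rightarrow> ('a history \<Rightarrow> ('a \<times> 'a) set) \<Rightarrow> nat \<Rightarrow> 'a voter_strategy"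
  where
  "pivot_voters X h x y G j h' Q =
     (if h' = h \<and> Q = {x, y} then (if j \<in> X then x else y) else sincere (G h') h' Q)"

lemma voter_strat_pivot_voters:
  assumes "\<And>h'. ranking (G h')"
  shows "voter_strat (pivot_voters X h x y G j)"
  unfolding voter_strat_def
proof (intro allI impI)
  fix h' :: "'a history" and Q
  assume "non_terminal h' \<and> offerable h' Q"
  then obtain a b where "Q = {a, b}" "a \<noteq> b"
    unfolding offerable_def unranked_def by blast
  then show "pivot_voters X h x y G j h' Q \<in> Q"
    using sincere_mem[OF assms] unfolding pivot_voters_def by auto
qed

lemma admissible_replay_pivot:
  assumes "non_terminal h" "unranked (hist_rel h) x y" "\<And>h'. ranking (G h')" "voter_strat t"
  shows "admissible I (replay_chair h {x, y}) ((pivot_voters X h x y G)(i := t))"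
  using chair_strat_replay_chair[of h "{x, y}"] assms voter_strat_pivot_voters[OF assms(3)]
  unfolding admissible_def offerable_def non_terminal_def by auto

lemma play_replay_pivot:
  fixes h :: "('a::finite \<times> 'a) list"
  assumes "odd I" "3 \<le> I" "i < I" "non_terminal h" "unranked (hist_rel h) x y"
    and X: "X \<subseteq> {..<I} - {i}" "card X = I div 2"
    and G: "\<And>h'. ranking (G h')" "\<And>k. k < length h \<Longrightarrow> hist_rel h \<subseteq> G (take k h)"
    and t: "voter_strat t" "t h {x, y} = w" "{w, l} = {x, y}" "w \<noteq> l"
  shows "play I (replay_chair h {x, y}) ((pivot_voters X h x y G)(i := t)) (Suc (length h)) =
    h @ [(w, l)]"
proof -
  let ?c = "replay_chair h {x, y}" and ?V = "(pivot_voters X h x y G)(i := t)"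
  have valid: "valid_hist h"
    using assms(4) unfolding non_terminal_def by simp
  have ok: "admissible I ?c ?V"
    by (rule admissible_replay_pivot[OF assms(4,5) G(1) t(1)])
  have "?V j (take k h) (?c (take k h)) = fst (h ! k)" if "k < length h" "j \<noteq> i" for k j
  proof -
    have "(fst (h ! k), snd (h ! k)) \<in> G (take k h)"
      using set_subset_hist_rel[of h] G(2)[OF that(1)] nth_mem[OF that(1)] by auto
    then show ?thesis
      using sincere_eq[OF G(1)] replay_chair_take[OF that(1)] take_neq_self[OF that(1)] that(2)
      unfolding pivot_voters_def by simp
  qed
  then have replay: "play I ?c ?V (length h) = h"
    using play_replays_history[OF ok assms(1-3) valid replay_chair_take] by simp
  have x_ne_y: "x \<noteq> y"
    using assms(5) unfolding unranked_def by simp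
  have "{j. j < I \<and> j \<noteq> i \<and> ?V j h {x, y} = x} = X"
    using X(1) x_ne_y unfolding pivot_voters_def by auto
  moreover have "\<forall>j<I. ?V j h {x, y} \<in> {x, y}"
    using t(2,3) unfolding pivot_voters_def by auto
  ultimately have "winner I (\<lambda>j. ?V j h (?c h)) (?c h) = w"
    using winner_pivotal[OF assms(1,3) x_ne_y, of "\<lambda>j. ?V j h {x, y}"] X(2) t(2)
    by (simp add: replay_chair_self)
  then have "step I ?c ?V h = (w, l)"
    using step_eq[of ?c h w l] t(3,4) by (simp add: replay_chair_self)
  then show ?thesis
    using play_Suc_step[of I ?c ?V "length h"] replay assms(4)
    unfolding non_terminal_def by simp
qed

lemma outcome_replay_pivot:
  fixes h :: "('a::finite \<times> 'a) list"
  assumes "odd I" "3 \<le> I" "i < I" "non_terminal h" "unranked (hist_rel h) x y"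
    and X: "X \<subseteq> {..<I} - {i}" "card X = I div 2"
    and G: "\<And>h'. ranking (G h')" "\<And>k. k < length h \<Longrightarrow> hist_rel h \<subseteq> G (take k h)"
    and t: "voter_strat t" "t h {x, y} = w" "{w, l} = {x, y}" "w \<noteq> l"
    and T: "ranking T" "hist_rel h \<subseteq> T" "(w, l) \<in> T"
      "\<And>g. hist_rel (h @ (w, l) # g) \<subseteq> T \<Longrightarrow> G (h @ (w, l) # g) = T"
  shows "outcome I (replay_chair h {x, y}) ((pivot_voters X h x y G)(i := t)) = T"
proof -
  let ?c = "replay_chair h {x, y}" and ?V = "(pivot_voters X h x y G)(i := t)"
  have ok: "admissible I ?c ?V"
    by (rule admissible_replay_pivot[OF assms(4,5) G(1) t(1)])
  have "hist_rel (h @ [(w, l)]) \<subseteq> T"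
    using trancl_mono_subset[of "hist_rel h \<union> {(w, l)}" T] T(1-3)
    unfolding ranking_def by (simp add: trancl_id)
  moreover have "?V j (h @ (w, l) # g) (?c (h @ (w, l) # g)) =
      sincere T (h @ (w, l) # g) (?c (h @ (w, l) # g))"
    if "hist_rel (h @ (w, l) # g) \<subseteq> T" "j \<noteq> i" for g j
    using T(4)[OF that(1)] that(2) unfolding pivot_voters_def by simp
  moreover have "Suc (length h) \<le> card (UNIV :: 'a set) * card (UNIV :: 'a set)"
    using valid_hist_length_less assms(4) unfolding non_terminal_def by (metis Suc_leI)
  ultimately have "hist_rel (play I ?c ?V (card (UNIV :: 'a set) * card (UNIV :: 'a set))) \<subseteq> T"
    using play_stays_within_ranking[OF ok assms(1-3) T(1), of "Suc (length h)"]
      play_replay_pivot[where G = G, OF assms(1-5) X G t] by simp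
  then show ?thesis
    using ranking_subset_eq[OF ranking_outcome[OF ok assms(1)] T(1)] unfolding outcome_def by blast
qed

lemma deviation_from_sincere:
  assumes "ranking P" "voter_strat s" "\<not> same_strat s (sincere P)"
  obtains h x y where "non_terminal h" "unranked (hist_rel h) x y" "(x, y) \<in> P" "s h {x, y} = y"
proof -
  obtain h Q where h: "non_terminal h" "offerable h Q" "s h Q \<noteq> sincere P h Q"
    using assms(3) unfolding same_strat_def by blast
  then obtain a b where "Q = {a, b}" "unranked (hist_rel h) a b"
    unfolding offerable_def by blast
  then obtain x y where xy: "Q = {x, y}" "(x, y) \<in> P" "unranked (hist_rel h) x y"
    using ranking_orient[OF assms(1)] unfolding unranked_def by (metis doubleton_eq_iff)
  then have "s h {x, y} = y"
    using assms(2) h sincere_eq[OF assms(1) xy(2)] unfolding voter_strat_def by auto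
  then show ?thesis
    using that h(1) xy(2,3) by blast
qed

lemma sincere_obviously_better_than_deviation:
  fixes pref :: "nat \<Rightarrow> ('a::finite \<times> 'a) set"
  assumes "odd I" "3 \<le> I" "ranking (pref i)" "i < I"
    and "voter_strat s" "\<not> same_strat s (sincere (pref i))"
  shows "\<exists>c vs. opponents_ok I i c vs \<and> obviously_better I pref i c vs (sincere (pref i)) s"
proof -
  obtain h x y where h: "non_terminal h" "unranked (hist_rel h) x y" "(x, y) \<in> pref i"
    "s h {x, y} = y"
    using deviation_from_sincere[OF assms(3,5,6)] .
  have valid: "valid_hist h"
    using h(1) unfolding non_terminal_def by simp
  have offerable: "offerable h {x, y}"
    using h(2) unfolding offerable_def by blast
  obtain T1 T2 where T: "ranking T1" "ranking T2" "hist_rel h \<subseteq> T1" "hist_rel h \<subseteq> T2"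
    "(x, y) \<in> T1" "(y, x) \<in> T2"
    "\<And>a b. (a, b) \<in> T2 \<Longrightarrow> {a, b} \<noteq> {x, y} \<Longrightarrow> (a, b) \<in> T1"
    using rankings_differing_only_at valid_hist_strict_order[OF valid] h(2) by metis
  have "I div 2 \<le> card ({..<I} - {i})"
    using assms(4) by simp
  then obtain X where X: "X \<subseteq> {..<I} - {i}" "card X = I div 2"
    by (meson obtain_subset_with_card_n)
  define G where "G h' = (if (y, x) \<in> hist_rel h' then T2 else T1)" for h' :: "'a history"
  let ?c = "replay_chair h {x, y}" and ?vs = "pivot_voters X h x y G"
  have G_ranking: "ranking (G h')" for h'
    using T(1,2) unfolding G_def by simp
  have G_prefix: "hist_rel h \<subseteq> G (take k h)" for k
    using hist_rel_append_mono[of "take k h" "drop k h"] T(3) h(2)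
    unfolding G_def unranked_def by auto
  have "x \<noteq> y"
    using h(2) unfolding unranked_def by simp
  note pivot = outcome_replay_pivot[where G = G, OF assms(1,2,4) h(1,2) X G_ranking G_prefix]
  have "outcome I ?c (?vs(i := sincere (pref i))) = T1"
  proof (rule pivot[where w = x and l = y, OF voter_strat_sincere[OF assms(3)]
        sincere_eq[OF assms(3) h(3)] _ \<open>x \<noteq> y\<close> T(1,3,5)])
    show "G (h @ (x, y) # g) = T1" if "hist_rel (h @ (x, y) # g) \<subseteq> T1" for g
      using that ranking_asym[OF T(1,5)] unfolding G_def by auto
  qed simp
  moreover have "outcome I ?c (?vs(i := s)) = T2"
  proof (rule pivot[where w = y and l = x, OF assms(5) h(4) _ \<open>x \<noteq> y\<close>[symmetric] T(2,4,6)])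
    show "G (h @ (y, x) # g) = T2" for g
      using hist_rel_append_mono[of "h @ [(y, x)]" g] set_subset_hist_rel[of "h @ [(y, x)]"]
      unfolding G_def by auto
  qed auto
  moreover have "more_aligned (pref i) T1 T2"
    unfolding more_aligned_def
    using T(7) ranking_asym[OF assms(3) h(3)] ranking_asym[OF T(2,6)] by (metis doubleton_eq_iff)
  moreover have "opponents_ok I i ?c ?vs"
    using chair_strat_replay_chair[OF valid offerable] voter_strat_pivot_voters[OF G_ranking]
    unfolding opponents_ok_def by simp
  ultimately show ?thesis
    unfolding obviously_better_def Let_def using T(5) ranking_asym[OF T(2,6)] by metis
qed

theorem proposition4:
  fixes I :: nat and pref :: "nat \<Rightarrow> ('a::finite \<times> 'a) set" and i :: nat
  assumes "odd I" and "3 \<le> I"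
    and "\<forall>j<I. ranking (pref j)"
    and "i < I"
  shows "dominant I pref i (sincere (pref i)) \<and>
         (\<forall>s. dominant I pref i s \<longrightarrow> same_strat s (sincere (pref i)))"
proof -
  have pref_i: "ranking (pref i)"
    using assms(3,4) by simp
  note never_worse = sincere_not_obviously_worse[where pref = pref and i = i, OF assms(1) pref_i]
  note beats = sincere_obviously_better_than_deviation[where pref = pref and i = i,
      OF assms(1,2) pref_i assms(4)]
  have same_strat_sym: "same_strat s t \<longleftrightarrow> same_strat t s" for s t :: "'a voter_strategy"
    unfolding same_strat_def by metis
  have "dominant I pref i (sincere (pref i))"
    unfolding dominant_def using voter_strat_sincere[OF pref_i] never_worse beats by blast
  moreover have "same_strat s (sincere (pref i))" if "dominant I pref i s" for s
    using that beats voter_strat_sincere[OF pref_i] same_strat_sym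
    unfolding dominant_def by blast
  ultimately show ?thesis
    by blast
qed

end
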